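(* Suppose assumption (C) below holds. Fix $k\ge3$ and let $\mathcal U_k$ be the set from (C); for a scalar $T$ (tensor of order $0$) define $\|T\|_{\mathcal U_k}=|T|$. Then for any $\varepsilon>0$ there exists $C\equiv C(\varepsilon,k)>0$ such that for all $i\in[N]$, all $0\le m\le k$, all $\mathbf s_1,\dots,\mathbf s_m\in\mathbb C^n$ and all $T\in(\mathbb C^n)^{\otimes k-m}$, \[|\langle\kappa_k(\mathbf g_i),\mathbf s_1\otimes\cdots\otimes\mathbf s_m\otimes T\rangle|\le Cn^{\varepsilon}(\sqrt n)^{k-m}\|T\|_{\mathcal U_k}\prod_{t=1}^m\|\mathbf s_t\|_2.\]
   Context: $\mathbf g_1,\dots,\mathbf g_N\in\mathbb R^n$ are random vectors with finite moments (indexed by $N$, $n=n(N)$). $\langle\cdot,\cdot\rangle$ denotes the non-conjugate (bilinear) scalar product on $(\mathbb C^n)^{\otimes k}$. $\kappa_k(\mathbf g_i)\in(\mathbb R^n)^{\otimes k}$ is the $k$-th cumulant tensor, with entries the mixed cumulants $\kappa_k(\mathbf e_{\alpha_1}^*\mathbf g_i,\dots,\mathbf e_{\alpha_k}^*\mathbf g_i)$. For $\mathcal U\subseteq\mathbb R^n$ and $T$ of order $k\ge1$, $\|T\|_{\mathcal U}=\sup_{\mathbf x_1,\dots,\mathbf x_k\in\mathcal U}|\langle\mathbf x_1\otimes\cdots\otimes\mathbf x_k,T\rangle|$. (C): for each $k\ge3$ there exist $C_k>0$ and a deterministic $\mathcal U_k\subset\mathbb R^n$ with $\{\mathbf e_1,\dots,\mathbf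 e_n\}\subseteq\mathcal U_k$, $|\mathcal U_k|\le n^{C_k}$, $\|\mathbf x\|_2\le C_k$ for all $\mathbf x\in\mathcal U_k$, such that for any $\varepsilon>0$ there is $C(\varepsilon,k)$ with, for each $i$, $m\in\{1,\dots,k-1\}$, $\mathbf s_1,\dots,\mathbf s_m\in\mathbb R^n$, $T\in(\mathbb R^n)^{\otimes k-m}$: $|\langle\kappa_k(\mathbf g_i),\mathbf s_1\otimes\cdots\otimes\mathbf s_m\otimes T\rangle|\le Cn^\varepsilon(\sqrt n)^{k-m-1}\|T\|_{\mathcal U_k}\prod_t\|\mathbf s_t\|_2$. *)

theory Defs
  imports "HOL-Probability.Probability" "HOL-Library.Disjoint_Sets"
begin

(* Vectors in K^n are represented as functions nat => K, only coordinates j < n matter.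
   Tensors of order r in (K^n)^{\<otimes> r} are functions on index lists alpha of length r
   with entries < n. *)

definition idx :: "nat \<Rightarrow> nat \<Rightarrow> nat list set" where
  "idx n r = {\<alpha>. length \<alpha> = r \<and> set \<alpha> \<subseteq> {..<n}}"

(* non-conjugate bilinear scalar product on (K^n)^{\<otimes> r} *)
definition tpair :: "nat \<Rightarrow> nat \<Rightarrow> (nat list \<Rightarrow> 'a::comm_semiring_1) \<Rightarrow> (nat list \<Rightarrow> 'a) \<Rightarrow> 'a" where
  "tpair n r A B = (\<Sum>\<alpha>\<in>idx n r. A \<alpha> * B \<alpha>)"

definition tprod :: "nat \<Rightarrow> (nat \<Rightarrow> nat \<Rightarrow> 'a::comm_semiring_1) \<Rightarrow> (nat list \<Rightarrow> 'a) \<Rightarrow> nat list \<Rightarrow> 'a" where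
  "tprod m s T = (\<lambda>\<alpha>. (\<Prod>t<m. s t (\<alpha> ! t)) * T (drop m \<alpha>))"

definition vprod :: "nat \<Rightarrow> (nat \<Rightarrow> nat \<Rightarrow> 'a::comm_semiring_1) \<Rightarrow> nat list \<Rightarrow> 'a" where
  "vprod r x = (\<lambda>\<alpha>. \<Prod>j<r. x j (\<alpha> ! j))"

definition vnorm2 :: "nat \<Rightarrow> (nat \<Rightarrow> 'a::real_normed_vector) \<Rightarrow> real" where
  "vnorm2 n s = sqrt (\<Sum>j<n. (norm (s j))^2)"

definition unorm :: "nat \<Rightarrow> (nat \<Rightarrow> real) set \<Rightarrow> nat \<Rightarrow> (nat list \<Rightarrow> 'a::{real_normed_algebra_1,comm_ring_1}) \<Rightarrow> real" where
  "unorm n U r T = Sup {norm (tpair n r (vprod r (\<lambda>j l. of_real (x j l))) T) | x. \<forall>j<r. x j \<in> U}"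

definition evec :: "nat \<Rightarrow> nat \<Rightarrow> real" where
  "evec j = (\<lambda>l. if l = j then 1 else 0)"

definition mixed_cumulant :: "'w measure \<Rightarrow> nat \<Rightarrow> (nat \<Rightarrow> 'w \<Rightarrow> real) \<Rightarrow> real" where
  "mixed_cumulant M k X =
     (\<Sum>P\<in>{P. partition_on {..<k} P}.
        (-1) ^ (card P - 1) * fact (card P - 1) * (\<Prod>B\<in>P. integral\<^sup>L M (\<lambda>\<omega>. \<Prod>j\<in>B. X j \<omega>)))"

definition cumulant_tensor :: "'w measure \<Rightarrow> nat \<Rightarrow> ('w \<Rightarrow> nat \<Rightarrow> real) \<Rightarrow> nat list \<Rightarrow> real" where
  "cumulant_tensor M k g = (\<lambda>\<alpha>. mixed_cumulant M k (\<lambda>j \<omega>. g \<omega> (\<alpha> ! j)))"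

definition random_vectors_setting ::
  "(nat \<Rightarrow> 'w measure) \<Rightarrow> (nat \<Rightarrow> nat) \<Rightarrow> (nat \<Rightarrow> nat \<Rightarrow> 'w \<Rightarrow> nat \<Rightarrow> real) \<Rightarrow> bool" where
  "random_vectors_setting M n g \<longleftrightarrow>
     (\<forall>N. prob_space (M N) \<and>
        (\<forall>i\<in>{1..N}. \<forall>\<alpha><n N.
           (\<lambda>\<omega>. g N i \<omega> \<alpha>) \<in> borel_measurable (M N) \<and>
           (\<forall>p::nat. integrable (M N) (\<lambda>\<omega>. \<bar>g N i \<omega> \<alpha>\<bar> ^ p))))"

(* Assumption (C) for a fixed k, with witnesses Ck and U (U N is the set U_k for dimension n N). *)
definition C_witness ::
  "(nat \<Rightarrow> 'w measure) \<Rightarrow> (nat \<Rightarrow> nat) \<Rightarrow> (nat \<Rightarrow> nat \<Rightarrow> 'w \<Rightarrow> nat \<Rightarrow> real)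
    \<Rightarrow> nat \<Rightarrow> real \<Rightarrow> (nat \<Rightarrow> (nat \<Rightarrow> real) set) \<Rightarrow> bool" where
  "C_witness M n g k Ck U \<longleftrightarrow>
     Ck > 0 \<and>
     (\<forall>N. finite (U N) \<and> U N \<subseteq> {x. \<forall>l\<ge>n N. x l = 0} \<and>
          evec ` {..<n N} \<subseteq> U N \<and>
          real (card (U N)) \<le> real (n N) powr Ck \<and>
          (\<forall>x\<in>U N. vnorm2 (n N) x \<le> Ck)) \<and>
     (\<forall>\<epsilon>>0. \<exists>C. \<forall>N. \<forall>i\<in>{1..N}. \<forall>m\<in>{1..k-1}.
        \<forall>(s::nat \<Rightarrow> nat \<Rightarrow> real) (T::nat list \<Rightarrow> real).
          \<bar>tpair (n N) k (cumulant_tensor (M N) k (g N i)) (tprod m s T)\<bar>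
            \<le> C * real (n N) powr \<epsilon> * sqrt (real (n N)) ^ (k - m - 1)
                * unorm (n N) (U N) (k - m) T * (\<Prod>t<m. vnorm2 (n N) (s t)))"

definition assumption_C ::
  "(nat \<Rightarrow> 'w measure) \<Rightarrow> (nat \<Rightarrow> nat) \<Rightarrow> (nat \<Rightarrow> nat \<Rightarrow> 'w \<Rightarrow> nat \<Rightarrow> real) \<Rightarrow> bool" where
  "assumption_C M n g \<longleftrightarrow> (\<forall>k\<ge>3. \<exists>Ck U. C_witness M n g k Ck U)"

end

theory Submission
  imports Defs
begin

text \<open>
  Assumption (C) bounds the pairing of the cumulant tensor with \<open>s\<^sub>1 \<otimes> \<dots> \<otimes> s\<^sub>m \<otimes> T\<close>
  only for \<open>1 \<le> m \<le> k - 1\<close>, but with one power of \<open>\<surd>n\<close> to spare; the extreme cases are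
  reduced to these. For \<open>m = 0\<close>, expand \<open>T = \<Sum>\<^sub>j e\<^sub>j \<otimes> T\<^sub>j\<close> along its first index. As
  \<open>e\<^sub>j \<in> U\<close>, each slice has \<open>\<parallel>T\<^sub>j\<parallel>\<^sub>U \<le> \<parallel>T\<parallel>\<^sub>U\<close>, so the case \<open>m = 1\<close> bounds each of the
  \<open>n = \<surd>n\<^sup>2\<close> terms by \<open>\<surd>n\<^bsup>k-2\<^esup> \<parallel>T\<parallel>\<^sub>U\<close>. For \<open>m = k\<close>, absorb \<open>s\<^sub>k\<close> into the scalar \<open>T\<close>:
  by Cauchy-Schwarz the vector \<open>T s\<^sub>k\<close> has \<open>U\<close>-norm at most \<open>C\<^sub>k \<parallel>s\<^sub>k\<parallel>\<^sub>2 \<bar>T\<bar>\<close>, and the case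
  \<open>m = k - 1\<close> applies. Complex data are split into real and imaginary parts: multilinearity
  turns the pairing into \<open>2\<^bsup>m+1\<^esup>\<close> real pairings, none with larger norms.
\<close>

lemma idx_0 [simp]: "idx n 0 = {[]}"
  unfolding idx_def by auto

lemma idx_0_dim: "0 < r \<Longrightarrow> idx 0 r = {}"
  unfolding idx_def by auto

lemma sum_idx_Suc: "(\<Sum>\<alpha>\<in>idx n (Suc r). f \<alpha>) = (\<Sum>a<n. \<Sum>\<beta>\<in>idx n r. f (a # \<beta>))"
proof -
  have idx_Suc: "idx n (Suc r) = (\<lambda>(a, \<beta>). a # \<beta>) ` ({..<n} \<times> idx n r)"
    by (auto simp: idx_def image_iff length_Suc_conv)
  have "inj_on (\<lambda>(a, \<beta>). a # \<beta>) ({..<n} \<times> idx n r)"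
    by (auto simp: inj_on_def)
  then show ?thesis
    unfolding idx_Suc by (simp add: sum.reindex sum.cartesian_product split_def)
qed

lemma tpair_0: "tpair n 0 A B = A [] * B []"
  unfolding tpair_def by simp

lemma tprod_0: "tprod 0 s T = T"
  unfolding tprod_def by simp

lemma vprod_Suc: "vprod (Suc r) x (a # \<beta>) = x 0 a * vprod r (\<lambda>j. x (Suc j)) \<beta>"
  unfolding vprod_def by (subst prod.lessThan_Suc_shift) simp

lemma vprod_of_real: "vprod r (\<lambda>j l. of_real (x j l)) = (\<lambda>\<alpha>. of_real (vprod r x \<alpha>))"
  unfolding vprod_def by simp

lemma sum_evec_mult: "j < n \<Longrightarrow> (\<Sum>a<n. evec j a * f a) = (f j :: real)"
  by (simp add: evec_def if_distrib[of "\<lambda>c. c * _"] cong: if_cong)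

lemma vnorm2_nonneg: "0 \<le> vnorm2 n s"
  unfolding vnorm2_def by (simp add: sum_nonneg)

lemma vnorm2_evec: "j < n \<Longrightarrow> vnorm2 n (evec j) = 1"
  unfolding vnorm2_def evec_def by (simp add: if_distrib[of "\<lambda>c. c\<^sup>2"] cong: if_cong)

lemma vnorm2_mono:
  assumes "\<And>l. norm (f l) \<le> norm (g l)"
  shows "vnorm2 n f \<le> vnorm2 n g"
  unfolding vnorm2_def
  by (intro real_sqrt_le_mono sum_mono power_mono assms norm_ge_zero)

lemma abs_sum_mult_le_vnorm2: "\<bar>\<Sum>a<n. f a * g a\<bar> \<le> vnorm2 n f * vnorm2 n (g :: nat \<Rightarrow> real)"
proof -
  have "\<bar>\<Sum>a<n. f a * g a\<bar> \<le> (\<Sum>a<n. \<bar>f a\<bar> * \<bar>g a\<bar>)"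
    by (rule order_trans[OF sum_abs]) (simp add: abs_mult)
  also have "\<dots> \<le> L2_set f {..<n} * L2_set g {..<n}"
    by (rule L2_set_mult_ineq)
  finally show ?thesis
    by (simp add: vnorm2_def L2_set_def)
qed

lemma unorm_upper:
  fixes T :: "nat list \<Rightarrow> 'a::{real_normed_algebra_1,comm_ring_1}"
  assumes "finite U" "\<forall>j<r. x j \<in> U"
  shows "norm (tpair n r (vprod r (\<lambda>j l. of_real (x j l))) T) \<le> unorm n U r T"
proof -
  let ?f = "\<lambda>x. norm (tpair n r (vprod r (\<lambda>j l. of_real (x j l))) T)"
  have "{?f x | x. \<forall>j<r. x j \<in> U} \<subseteq> ?f ` PiE {..<r} (\<lambda>_. U)"
  proof clarify
    fix x assume x: "\<forall>j<r. x j \<in> U"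
    have "?f x = ?f (restrict x {..<r})"
      unfolding vprod_def by (metis (no_types, lifting) prod.cong restrict_apply')
    with x show "?f x \<in> ?f ` PiE {..<r} (\<lambda>_. U)"
      by (intro image_eqI[of _ _ "restrict x {..<r}"]) auto
  qed
  then have "finite {?f x | x. \<forall>j<r. x j \<in> U}"
    by (rule finite_subset) (simp add: assms(1) finite_PiE)
  then show ?thesis
    unfolding unorm_def using assms(2) by (intro cSup_upper bdd_above_finite) auto
qed

lemma unorm_least:
  fixes T :: "nat list \<Rightarrow> 'a::{real_normed_algebra_1,comm_ring_1}"
  assumes "U \<noteq> {}"
    and "\<And>x. \<forall>j<r. x j \<in> U \<Longrightarrow> norm (tpair n r (vprod r (\<lambda>j l. of_real (x j l))) T) \<le> B"
  shows "unorm n U r T \<le> B"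
  unfolding unorm_def using assms by (intro cSup_least) auto

lemma unorm_nonneg:
  fixes T :: "nat list \<Rightarrow> 'a::{real_normed_algebra_1,comm_ring_1}"
  assumes "finite U" "U \<noteq> {}"
  shows "0 \<le> unorm n U r T"
proof -
  obtain u where "u \<in> U" using assms(2) by blast
  then have "norm (tpair n r (vprod r (\<lambda>j l. of_real ((\<lambda>_. u) j l))) T) \<le> unorm n U r T"
    by (intro unorm_upper assms(1)) auto
  then show ?thesis
    by (rule order_trans[OF norm_ge_zero])
qed

lemma unorm_0: "unorm n U 0 T = norm (T [])"
  unfolding unorm_def tpair_0 vprod_def by simp

lemma unorm_linear_le:
  fixes T :: "nat list \<Rightarrow> 'a::{real_normed_algebra_1,comm_ring_1}"
    and f :: "'a \<Rightarrow> 'b::{real_normed_algebra_1,comm_ring_1}"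
  assumes "finite U" "U \<noteq> {}" "linear f" "\<And>z. norm (f z) \<le> norm z"
  shows "unorm n U r (\<lambda>\<alpha>. f (T \<alpha>)) \<le> unorm n U r T"
proof (rule unorm_least[OF assms(2)])
  fix x :: "nat \<Rightarrow> nat \<Rightarrow> real" assume x: "\<forall>j<r. x j \<in> U"
  have "tpair n r (vprod r (\<lambda>j l. of_real (x j l))) (\<lambda>\<alpha>. f (T \<alpha>))
      = f (tpair n r (vprod r (\<lambda>j l. of_real (x j l))) T)"
    unfolding tpair_def vprod_of_real
    by (simp add: linear_sum[OF assms(3)] linear_cmul[OF assms(3)] flip: scaleR_conv_of_real)
  then show "norm (tpair n r (vprod r (\<lambda>j l. of_real (x j l))) (\<lambda>\<alpha>. f (T \<alpha>))) \<le> unorm n U r T"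
    using assms(4) unorm_upper[OF assms(1) x] by (metis order_trans)
qed

lemma unorm_slice_le:
  assumes "finite U" "U \<noteq> {}" "evec j \<in> U" "j < n"
  shows "unorm n U r (\<lambda>\<beta>. (T :: nat list \<Rightarrow> real) (j # \<beta>)) \<le> unorm n U (Suc r) T"
proof (rule unorm_least[OF assms(2)])
  fix x :: "nat \<Rightarrow> nat \<Rightarrow> real" assume x: "\<forall>i<r. x i \<in> U"
  define x' where "x' i = (if i = 0 then evec j else x (i - 1))" for i
  have x': "\<forall>i<Suc r. x' i \<in> U"
    using x assms(3) unfolding x'_def by (auto simp: less_Suc_eq_0_disj)
  have "tpair n (Suc r) (vprod (Suc r) x') T
      = (\<Sum>a<n. evec j a * (\<Sum>\<beta>\<in>idx n r. vprod r x \<beta> * T (a # \<beta>)))"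
    unfolding tpair_def sum_idx_Suc vprod_Suc by (simp add: x'_def sum_distrib_left mult.assoc)
  also have "\<dots> = tpair n r (vprod r x) (\<lambda>\<beta>. T (j # \<beta>))"
    unfolding tpair_def by (rule sum_evec_mult[OF assms(4)])
  finally show "norm (tpair n r (vprod r (\<lambda>j l. of_real (x j l))) (\<lambda>\<beta>. T (j # \<beta>)))
      \<le> unorm n U (Suc r) T"
    using unorm_upper[OF assms(1) x', where n = n and T = T] by simp
qed

lemma unorm_order_1_le:
  assumes "U \<noteq> {}" "\<forall>x\<in>U. vnorm2 n x \<le> b"
  shows "unorm n U 1 (\<lambda>\<beta>. v (hd \<beta>) * a) \<le> b * vnorm2 n v * \<bar>a :: real\<bar>"
proof (rule unorm_least[OF assms(1)])
  fix x :: "nat \<Rightarrow> nat \<Rightarrow> real" assume x: "\<forall>j<1. x j \<in> U"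
  have "\<bar>tpair n 1 (vprod 1 x) (\<lambda>\<beta>. v (hd \<beta>) * a)\<bar> = \<bar>\<Sum>l<n. x 0 l * v l\<bar> * \<bar>a\<bar>"
    unfolding tpair_def One_nat_def sum_idx_Suc vprod_def
    by (simp add: sum_distrib_right abs_mult mult.assoc flip: abs_mult)
  also have "\<dots> \<le> (b * vnorm2 n v) * \<bar>a\<bar>"
  proof (rule mult_right_mono[OF order_trans[OF abs_sum_mult_le_vnorm2]])
    show "vnorm2 n (x 0) * vnorm2 n v \<le> b * vnorm2 n v"
      using x assms(2) by (simp add: mult_right_mono vnorm2_nonneg)
  qed simp
  finally show "norm (tpair n 1 (vprod 1 (\<lambda>j l. of_real (x j l))) (\<lambda>\<beta>. v (hd \<beta>) * a))
      \<le> b * vnorm2 n v * \<bar>a\<bar>"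
    by simp
qed

lemma tpair_eq_sum_slices:
  "tpair n (Suc r) A T = (\<Sum>j<n. tpair n (Suc r) A (tprod 1 (\<lambda>_. evec j) (\<lambda>\<beta>. T (j # \<beta>))))"
proof -
  have "tpair n (Suc r) A (tprod 1 (\<lambda>_. evec j) (\<lambda>\<beta>. T (j # \<beta>)))
      = (\<Sum>\<beta>\<in>idx n r. A (j # \<beta>) * T (j # \<beta>))" if "j < n" for j
  proof -
    have "tpair n (Suc r) A (tprod 1 (\<lambda>_. evec j) (\<lambda>\<beta>. T (j # \<beta>)))
        = (\<Sum>a<n. evec j a * (\<Sum>\<beta>\<in>idx n r. A (a # \<beta>) * T (j # \<beta>)))"
      unfolding tpair_def sum_idx_Suc tprod_def by (simp add: sum_distrib_left ac_simps)
    then show ?thesis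
      by (simp add: sum_evec_mult[OF that])
  qed
  then show ?thesis
    unfolding tpair_def[of n "Suc r" A T] sum_idx_Suc by simp
qed

lemma tpair_tprod_Suc:
  "tpair n (Suc r) A (tprod (Suc r) s T) = tpair n (Suc r) A (tprod r s (\<lambda>\<beta>. s r (hd \<beta>) * T []))"
  unfolding tpair_def sum_idx_Suc
proof (intro sum.cong refl)
  fix a \<beta> assume "\<beta> \<in> idx n r"
  then have "length \<beta> = r" by (simp add: idx_def)
  then show "A (a # \<beta>) * tprod (Suc r) s T (a # \<beta>)
      = A (a # \<beta>) * tprod r s (\<lambda>\<beta>. s r (hd \<beta>) * T []) (a # \<beta>)"
    unfolding tprod_def by (cases r) (auto simp: hd_drop_conv_nth ac_simps)
qed

lemma prod_complex_expand:
  assumes "finite A"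
  shows "(\<Prod>t\<in>A. z t)
    = (\<Sum>B\<in>Pow A. \<i> ^ card (A - B) * of_real (\<Prod>t\<in>A. if t \<in> B then Re (z t) else Im (z t)))"
proof -
  have "(\<Prod>t\<in>A. z t) = (\<Prod>t\<in>A. of_real (Re (z t)) + \<i> * of_real (Im (z t)))"
    by (simp add: complex_eq[symmetric])
  also have "\<dots> = (\<Sum>B\<in>Pow A. (\<Prod>t\<in>B. of_real (Re (z t))) * (\<Prod>t\<in>A - B. \<i> * of_real (Im (z t))))"
    by (rule prod_add[OF assms])
  also have "\<dots> = (\<Sum>B\<in>Pow A. \<i> ^ card (A - B) * of_real (\<Prod>t\<in>A. if t \<in> B then Re (z t) else Im (z t)))"
  proof (intro sum.cong refl)
    fix B assume "B \<in> Pow A"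
    then have "(\<Prod>t\<in>A. if t \<in> B then Re (z t) else Im (z t)) = (\<Prod>t\<in>B. Re (z t)) * (\<Prod>t\<in>A - B. Im (z t))"
      using assms by (simp add: prod.If_cases Int_absorb1 flip: Diff_eq)
    then show "(\<Prod>t\<in>B. of_real (Re (z t))) * (\<Prod>t\<in>A - B. \<i> * of_real (Im (z t)))
        = \<i> ^ card (A - B) * of_real (\<Prod>t\<in>A. if t \<in> B then Re (z t) else Im (z t))"
      by (simp add: prod.distrib ac_simps)
  qed
  finally show ?thesis .
qed

definition select_Re_Im :: "nat set \<Rightarrow> (nat \<Rightarrow> nat \<Rightarrow> complex) \<Rightarrow> nat \<Rightarrow> nat \<Rightarrow> real" where
  "select_Re_Im B s t l = (if t \<in> B then Re (s t l) else Im (s t l))"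

lemma tprod_complex_expand:
  "tprod m s T \<alpha> = (\<Sum>B\<in>Pow {..<m}. \<i> ^ card ({..<m} - B) *
     (of_real (tprod m (select_Re_Im B s) (\<lambda>\<beta>. Re (T \<beta>)) \<alpha>)
      + \<i> * of_real (tprod m (select_Re_Im B s) (\<lambda>\<beta>. Im (T \<beta>)) \<alpha>)))"
proof -
  let ?P = "\<lambda>B. \<Prod>t<m. select_Re_Im B s t (\<alpha> ! t)"
  have "tprod m s T \<alpha> = (\<Sum>B\<in>Pow {..<m}. \<i> ^ card ({..<m} - B) * of_real (?P B)) * T (drop m \<alpha>)"
    unfolding tprod_def select_Re_Im_def by (subst prod_complex_expand) simp_all
  also have "\<dots> = (\<Sum>B\<in>Pow {..<m}. \<i> ^ card ({..<m} - B) * of_real (?P B)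
      * (of_real (Re (T (drop m \<alpha>))) + \<i> * of_real (Im (T (drop m \<alpha>)))))"
    by (simp add: sum_distrib_right flip: complex_eq)
  finally show ?thesis
    unfolding tprod_def by (simp add: algebra_simps)
qed

lemma norm_tpair_tprod_complex_le:
  "cmod (tpair n r (\<lambda>\<alpha>. of_real (\<kappa> \<alpha>)) (tprod m s T))
    \<le> (\<Sum>B\<in>Pow {..<m}. \<bar>tpair n r \<kappa> (tprod m (select_Re_Im B s) (\<lambda>\<beta>. Re (T \<beta>)))\<bar>
                       + \<bar>tpair n r \<kappa> (tprod m (select_Re_Im B s) (\<lambda>\<beta>. Im (T \<beta>)))\<bar>)"
proof -
  have sum_of_real_pair: "(\<Sum>x\<in>I. c * (of_real (a x) + \<i> * of_real (b x)))
      = c * (of_real (sum a I) + \<i> * of_real (sum b I))" for c I a b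
    by (simp add: of_real_sum sum.distrib flip: sum_distrib_left)
  let ?Re = "\<lambda>B. tpair n r \<kappa> (tprod m (select_Re_Im B s) (\<lambda>\<beta>. Re (T \<beta>)))"
  let ?Im = "\<lambda>B. tpair n r \<kappa> (tprod m (select_Re_Im B s) (\<lambda>\<beta>. Im (T \<beta>)))"
  have "tpair n r (\<lambda>\<alpha>. of_real (\<kappa> \<alpha>)) (tprod m s T)
      = (\<Sum>B\<in>Pow {..<m}. \<Sum>\<alpha>\<in>idx n r. \<i> ^ card ({..<m} - B) *
          (of_real (\<kappa> \<alpha> * tprod m (select_Re_Im B s) (\<lambda>\<beta>. Re (T \<beta>)) \<alpha>)
           + \<i> * of_real (\<kappa> \<alpha> * tprod m (select_Re_Im B s) (\<lambda>\<beta>. Im (T \<beta>)) \<alpha>)))"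
    unfolding tpair_def tprod_complex_expand[of m s T] sum_distrib_left
    by (subst sum.swap) (simp add: algebra_simps)
  also have "\<dots> = (\<Sum>B\<in>Pow {..<m}. \<i> ^ card ({..<m} - B) * (of_real (?Re B) + \<i> * of_real (?Im B)))"
    unfolding tpair_def by (rule sum.cong[OF refl sum_of_real_pair])
  finally have expand: "tpair n r (\<lambda>\<alpha>. of_real (\<kappa> \<alpha>)) (tprod m s T)
      = (\<Sum>B\<in>Pow {..<m}. \<i> ^ card ({..<m} - B) * (of_real (?Re B) + \<i> * of_real (?Im B)))" .
  have "cmod (\<Sum>B\<in>Pow {..<m}. \<i> ^ card ({..<m} - B) * (of_real (?Re B) + \<i> * of_real (?Im B)))
      \<le> (\<Sum>B\<in>Pow {..<m}. cmod (of_real (?Re B) + \<i> * of_real (?Im B)))"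
    by (rule order_trans[OF norm_sum]) (simp add: norm_mult norm_power)
  also have "\<dots> \<le> (\<Sum>B\<in>Pow {..<m}. \<bar>?Re B\<bar> + \<bar>?Im B\<bar>)"
    by (intro sum_mono order_trans[OF norm_triangle_ineq]) (simp add: norm_mult)
  finally show ?thesis
    unfolding expand .
qed

(* For fixed N, c stands for C(\<epsilon>,k) n\<^sup>\<epsilon> in assumption (C) and b for C\<^sub>k. *)
locale pairing_bound =
  fixes n :: nat and U :: "(nat \<Rightarrow> real) set" and \<kappa> :: "nat list \<Rightarrow> real" and k :: nat
    and c b :: real
  assumes n_pos: "1 \<le> n" and k_ge_2: "2 \<le> k" and finite_U: "finite U"
    and evec_in_U: "evec ` {..<n} \<subseteq> U" and vnorm2_U_le: "\<forall>x\<in>U. vnorm2 n x \<le> b"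
    and intermediate_bound: "\<forall>m\<in>{1..k-1}. \<forall>(s :: nat \<Rightarrow> nat \<Rightarrow> real) (T :: nat list \<Rightarrow> real).
      \<bar>tpair n k \<kappa> (tprod m s T)\<bar>
        \<le> c * sqrt (real n) ^ (k - m - 1) * unorm n U (k - m) T * (\<Prod>t<m. vnorm2 n (s t))"
begin

lemma evec_0_in_U: "evec 0 \<in> U"
  using evec_in_U n_pos by auto

lemma U_nonempty: "U \<noteq> {}"
  using evec_0_in_U by auto

lemma one_le_b: "1 \<le> b"
  using vnorm2_U_le evec_0_in_U vnorm2_evec[of 0 n] n_pos by force

lemma one_le_sqrt_n: "1 \<le> sqrt (real n)"
  using n_pos by simp

lemma unorm_U_nonneg: "0 \<le> unorm n U r T"
  by (rule unorm_nonneg[OF finite_U U_nonempty])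

lemma intermediate_bound_abs:
  assumes "m \<in> {1..k-1}"
  shows "\<bar>tpair n k \<kappa> (tprod m s T)\<bar>
    \<le> \<bar>c\<bar> * sqrt (real n) ^ (k - m - 1) * unorm n U (k - m) T * (\<Prod>t<m. vnorm2 n (s t))"
  using intermediate_bound assms
  by (fastforce intro: order_trans mult_right_mono unorm_U_nonneg prod_nonneg vnorm2_nonneg)

lemma real_bound_intermediate:
  assumes "m \<in> {1..k-1}"
  shows "\<bar>tpair n k \<kappa> (tprod m s T)\<bar>
    \<le> \<bar>c\<bar> * b * sqrt (real n) ^ (k - m) * unorm n U (k - m) T * (\<Prod>t<m. vnorm2 n (s t))"
proof -
  have "\<bar>c\<bar> * sqrt (real n) ^ (k - m - 1) \<le> \<bar>c\<bar> * b * sqrt (real n) ^ (k - m)"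
    using one_le_b one_le_sqrt_n
    by (intro mult_mono power_increasing) (auto simp: mult_le_cancel_left1)
  then show ?thesis
    using intermediate_bound_abs[OF assms, of s T]
    by (fastforce intro: order_trans mult_right_mono unorm_U_nonneg prod_nonneg vnorm2_nonneg)
qed

lemma real_bound_no_vectors:
  "\<bar>tpair n k \<kappa> T\<bar> \<le> \<bar>c\<bar> * b * sqrt (real n) ^ k * unorm n U k T"
proof -
  obtain r where k: "k = Suc r" using k_ge_2 by (cases k) auto
  let ?X = "\<bar>c\<bar> * sqrt (real n) ^ (k - 2) * unorm n U k T"
  have slice: "\<bar>tpair n k \<kappa> (tprod 1 (\<lambda>_. evec j) (\<lambda>\<beta>. T (j # \<beta>)))\<bar> \<le> ?X" if "j < n" for j
  proof -
    have "\<bar>tpair n k \<kappa> (tprod 1 (\<lambda>_. evec j) (\<lambda>\<beta>. T (j # \<beta>)))\<bar>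
        \<le> \<bar>c\<bar> * sqrt (real n) ^ (k - 2) * unorm n U r (\<lambda>\<beta>. T (j # \<beta>))"
      using intermediate_bound_abs[of 1 "\<lambda>_. evec j" "\<lambda>\<beta>. T (j # \<beta>)"] k_ge_2 vnorm2_evec[OF that]
      by (simp add: k numeral_2_eq_2)
    also have "\<dots> \<le> ?X"
      using unorm_slice_le[OF finite_U U_nonempty _ that, of r T] evec_in_U that
      by (intro mult_left_mono) (auto simp: k)
    finally show ?thesis .
  qed
  have "\<bar>tpair n k \<kappa> T\<bar> \<le> (\<Sum>j<n. \<bar>tpair n k \<kappa> (tprod 1 (\<lambda>_. evec j) (\<lambda>\<beta>. T (j # \<beta>)))\<bar>)"
    unfolding k tpair_eq_sum_slices[of n r \<kappa> T] by (rule sum_abs)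
  also have "\<dots> \<le> real n * ?X"
    using sum_mono[of "{..<n}", OF slice] by simp
  also have "real n * ?X = \<bar>c\<bar> * sqrt (real n) ^ k * unorm n U k T"
  proof -
    have "sqrt (real n) ^ k = sqrt (real n) ^ 2 * sqrt (real n) ^ (k - 2)"
      using k_ge_2 by (metis le_add_diff_inverse power_add)
    then show ?thesis by simp
  qed
  also have "\<dots> \<le> \<bar>c\<bar> * b * sqrt (real n) ^ k * unorm n U k T"
    using one_le_b unorm_U_nonneg[of k T]
    by (intro mult_right_mono) (auto simp: mult_le_cancel_left1)
  finally show ?thesis .
qed

lemma real_bound_all_vectors:
  "\<bar>tpair n k \<kappa> (tprod k s T)\<bar> \<le> \<bar>c\<bar> * b * \<bar>T []\<bar> * (\<Prod>t<k. vnorm2 n (s t))"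
proof -
  obtain r where k: "k = Suc r" using k_ge_2 by (cases k) auto
  let ?T' = "\<lambda>\<beta>. s r (hd \<beta>) * T []"
  let ?P = "\<Prod>t<r. vnorm2 n (s t)"
  have "\<bar>tpair n k \<kappa> (tprod k s T)\<bar> = \<bar>tpair n k \<kappa> (tprod r s ?T')\<bar>"
    unfolding k tpair_tprod_Suc ..
  also have "\<dots> \<le> \<bar>c\<bar> * unorm n U 1 ?T' * ?P"
    using intermediate_bound_abs[of r s ?T'] k_ge_2 by (simp add: k)
  also have "\<dots> \<le> \<bar>c\<bar> * (b * vnorm2 n (s r) * \<bar>T []\<bar>) * ?P"
    using unorm_order_1_le[OF U_nonempty vnorm2_U_le]
    by (intro mult_right_mono mult_left_mono) (auto intro: prod_nonneg vnorm2_nonneg)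
  also have "\<dots> = \<bar>c\<bar> * b * \<bar>T []\<bar> * (\<Prod>t<k. vnorm2 n (s t))"
    by (simp add: k ac_simps)
  finally show ?thesis .
qed

lemma real_bound:
  assumes "m \<le> k"
  shows "\<bar>tpair n k \<kappa> (tprod m s T)\<bar>
    \<le> \<bar>c\<bar> * b * sqrt (real n) ^ (k - m) * unorm n U (k - m) T * (\<Prod>t<m. vnorm2 n (s t))"
proof -
  consider "m = 0" | "m = k" | "m \<in> {1..k-1}" using assms by fastforce
  then show ?thesis
  proof cases
    case 1
    then show ?thesis using real_bound_no_vectors[of T] by (simp add: tprod_0)
  next
    case 2
    then show ?thesis using real_bound_all_vectors[of s T] by (simp add: unorm_0)
  next
    case 3
    then show ?thesis by (rule real_bound_intermediate)
  qed
qed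

lemma complex_bound:
  fixes s :: "nat \<Rightarrow> nat \<Rightarrow> complex" and T :: "nat list \<Rightarrow> complex"
  assumes "m \<le> k"
  shows "cmod (tpair n k (\<lambda>\<alpha>. of_real (\<kappa> \<alpha>)) (tprod m s T))
    \<le> 2 ^ (m + 1) * \<bar>c\<bar> * b * sqrt (real n) ^ (k - m) * unorm n U (k - m) T
       * (\<Prod>t<m. vnorm2 n (s t))"
proof -
  let ?X = "\<bar>c\<bar> * b * sqrt (real n) ^ (k - m) * unorm n U (k - m) T * (\<Prod>t<m. vnorm2 n (s t))"
  have part_bound: "\<bar>tpair n k \<kappa> (tprod m (select_Re_Im B s) (\<lambda>\<beta>. f (T \<beta>)))\<bar> \<le> ?X"
    if "linear f" "\<And>z. norm (f z) \<le> norm z" for f :: "complex \<Rightarrow> real" and B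
  proof -
    have "unorm n U (k - m) (\<lambda>\<beta>. f (T \<beta>)) \<le> unorm n U (k - m) T"
      by (rule unorm_linear_le[OF finite_U U_nonempty that])
    moreover have "(\<Prod>t<m. vnorm2 n (select_Re_Im B s t)) \<le> (\<Prod>t<m. vnorm2 n (s t))"
      by (intro prod_mono conjI vnorm2_nonneg vnorm2_mono)
        (simp add: select_Re_Im_def abs_Re_le_cmod abs_Im_le_cmod)
    ultimately show ?thesis
      using real_bound[OF assms, of "select_Re_Im B s" "\<lambda>\<beta>. f (T \<beta>)"] one_le_b
      by (elim order_trans) (intro mult_mono mult_left_mono; simp add: unorm_U_nonneg prod_nonneg vnorm2_nonneg)
  qed
  have "cmod (tpair n k (\<lambda>\<alpha>. of_real (\<kappa> \<alpha>)) (tprod m s T)) \<le> (\<Sum>B\<in>Pow {..<m}. ?X + ?X)"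
    using part_bound[of Re] part_bound[of Im] abs_Re_le_cmod abs_Im_le_cmod
    by (intro order_trans[OF norm_tpair_tprod_complex_le] sum_mono add_mono)
      (auto intro: bounded_linear.linear bounded_linear_Re bounded_linear_Im)
  also have "\<dots> = 2 ^ (m + 1) * ?X"
    by (simp add: card_Pow)
  finally show ?thesis
    by (simp add: ac_simps)
qed

lemma complex_bound_factored:
  fixes s :: "nat \<Rightarrow> nat \<Rightarrow> complex" and T :: "nat list \<Rightarrow> complex"
  assumes "m \<le> k" "c = D * P" "0 \<le> P"
  shows "cmod (tpair n k (\<lambda>\<alpha>. of_real (\<kappa> \<alpha>)) (tprod m s T))
    \<le> (2 ^ (k + 1) * \<bar>D\<bar> * b + 1) * P * sqrt (real n) ^ (k - m) * unorm n U (k - m) T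
       * (\<Prod>t<m. vnorm2 n (s t))"
proof -
  let ?X = "P * sqrt (real n) ^ (k - m) * unorm n U (k - m) T * (\<Prod>t<m. vnorm2 n (s t))"
  have "cmod (tpair n k (\<lambda>\<alpha>. of_real (\<kappa> \<alpha>)) (tprod m s T)) \<le> (2 ^ (m + 1) * \<bar>D\<bar> * b) * ?X"
    using complex_bound[OF assms(1), of s T] assms(2,3) by (simp add: abs_mult ac_simps)
  also have "\<dots> \<le> (2 ^ (k + 1) * \<bar>D\<bar> * b + 1) * ?X"
  proof (rule mult_right_mono)
    have "(2::real) ^ (m + 1) * (\<bar>D\<bar> * b) \<le> 2 ^ (k + 1) * (\<bar>D\<bar> * b)"
      using assms(1) one_le_b by (intro mult_right_mono power_increasing) auto
    then show "2 ^ (m + 1) * \<bar>D\<bar> * b \<le> 2 ^ (k + 1) * \<bar>D\<bar> * b + 1"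
      by (simp add: mult.assoc)
    show "0 \<le> ?X"
      using assms(3) by (simp add: unorm_U_nonneg prod_nonneg vnorm2_nonneg)
  qed
  finally show ?thesis
    by (simp add: ac_simps)
qed

end

lemma uniform_complex_bound:
  fixes \<kappa> :: "nat \<Rightarrow> nat \<Rightarrow> nat list \<Rightarrow> real"
  assumes "0 < k" "0 \<le> b"
    and "\<exists>D. \<forall>N. \<forall>i\<in>{1..N}. 1 \<le> n N \<longrightarrow>
      pairing_bound (n N) (U N) (\<kappa> N i) k (D * real (n N) powr \<epsilon>) b"
  shows "\<exists>C>0. \<forall>N. \<forall>i\<in>{1..N}. \<forall>m\<le>k. \<forall>s T.
    cmod (tpair (n N) k (\<lambda>\<alpha>. complex_of_real (\<kappa> N i \<alpha>)) (tprod m s T))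
      \<le> C * real (n N) powr \<epsilon> * sqrt (real (n N)) ^ (k - m)
         * unorm (n N) (U N) (k - m) T * (\<Prod>t<m. vnorm2 (n N) (s t))"
proof -
  obtain D where bound: "\<And>N i. i \<in> {1..N} \<Longrightarrow> 1 \<le> n N \<Longrightarrow>
      pairing_bound (n N) (U N) (\<kappa> N i) k (D * real (n N) powr \<epsilon>) b"
    using assms(3) by blast
  have "cmod (tpair (n N) k (\<lambda>\<alpha>. complex_of_real (\<kappa> N i \<alpha>)) (tprod m s T))
      \<le> (2 ^ (k + 1) * \<bar>D\<bar> * b + 1) * real (n N) powr \<epsilon> * sqrt (real (n N)) ^ (k - m)
         * unorm (n N) (U N) (k - m) T * (\<Prod>t<m. vnorm2 (n N) (s t))"
    if "i \<in> {1..N}" "m \<le> k" for N i m s T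
  proof (cases "n N = 0")
    case True
    then show ?thesis
      using assms(1) by (simp add: tpair_def idx_0_dim)
  next
    case False
    then show ?thesis
      using pairing_bound.complex_bound_factored[OF bound[OF that(1)] that(2)] by simp
  qed
  moreover have "0 < 2 ^ (k + 1) * \<bar>D\<bar> * b + 1"
    using assms(2) by (simp add: add_nonneg_pos)
  ultimately show ?thesis
    by blast
qed

lemma C_witness_pairing_bound:
  assumes "C_witness M n g k Ck U" "2 \<le> k" "0 < \<epsilon>"
  shows "\<exists>D. \<forall>N. \<forall>i\<in>{1..N}. 1 \<le> n N \<longrightarrow>
    pairing_bound (n N) (U N) (cumulant_tensor (M N) k (g N i)) k (D * real (n N) powr \<epsilon>) Ck"
proof -
  obtain D where D: "\<forall>N. \<forall>i\<in>{1..N}. \<forall>m\<in>{1..k-1}.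
      \<forall>(s :: nat \<Rightarrow> nat \<Rightarrow> real) (T :: nat list \<Rightarrow> real).
        \<bar>tpair (n N) k (cumulant_tensor (M N) k (g N i)) (tprod m s T)\<bar>
          \<le> D * real (n N) powr \<epsilon> * sqrt (real (n N)) ^ (k - m - 1)
             * unorm (n N) (U N) (k - m) T * (\<Prod>t<m. vnorm2 (n N) (s t))"
    using assms(1,3) unfolding C_witness_def by (elim conjE allE[of _ \<epsilon>] impE exE)
  have "pairing_bound (n N) (U N) (cumulant_tensor (M N) k (g N i)) k (D * real (n N) powr \<epsilon>) Ck"
    if "i \<in> {1..N}" "1 \<le> n N" for N i
    using that assms(1,2) D unfolding C_witness_def by unfold_locales auto
  then show ?thesis
    by blast
qed

theorem lemma3p14:
  fixes M :: "nat \<Rightarrow> 'w measure" and n :: "nat \<Rightarrow> nat"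
    and g :: "nat \<Rightarrow> nat \<Rightarrow> 'w \<Rightarrow> nat \<Rightarrow> real"
    and k :: nat and Ck :: real and U :: "nat \<Rightarrow> (nat \<Rightarrow> real) set"
  assumes setting: "random_vectors_setting M n g"
    and C: "assumption_C M n g"
    and k: "k \<ge> 3"
    and Uk: "C_witness M n g k Ck U"
  shows "\<forall>\<epsilon>>0. \<exists>C>0. \<forall>N. \<forall>i\<in>{1..N}. \<forall>m\<le>k.
           \<forall>(s::nat \<Rightarrow> nat \<Rightarrow> complex) (T::nat list \<Rightarrow> complex).
             cmod (tpair (n N) k (\<lambda>\<alpha>. complex_of_real (cumulant_tensor (M N) k (g N i) \<alpha>)) (tprod m s T))
               \<le> C * real (n N) powr \<epsilon> * sqrt (real (n N)) ^ (k - m)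
                  * unorm (n N) (U N) (k - m) T * (\<Prod>t<m. vnorm2 (n N) (s t))"
  using k Uk
  by (intro allI impI uniform_complex_bound[where b = Ck] C_witness_pairing_bound[OF Uk])
    (auto simp: C_witness_def)

end
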